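(* Let $n\ge 1$, $\nu\in\mathbb{S}^{2n}$ and $d\in\mathbb{R}$, and let $\Pi^+_{\nu,d}=\{\xi\in\mathbb{R}^{2n+1}:\langle\xi,\nu\rangle>d\}$. Then for every $u\in C_0^\infty(\Pi^+_{\nu,d})$, \[ \int_{\Pi^+_{\nu,d}}|\nabla_{\mathbb{H}^n}u|^2\,d\xi\;\ge\;\frac14\int_{\Pi^+_{\nu,d}}\sum_{i=1}^n\frac{\langle X_i(\xi),\nu\rangle^2+\langle Y_i(\xi),\nu\rangle^2}{\operatorname{dist}(\xi,\partial\Pi^+_{\nu,d})^2}\,|u|^2\,d\xi . \]
   Context: The Heisenberg group $\mathbb{H}^n$ is $\mathbb{R}^{2n+1}$ with points written $\xi=(x,y,t)$, $x,y\in\mathbb{R}^n$, $t\in\mathbb{R}$, and Lebesgue measure $d\xi$. For $1\le i\le n$ the left-invariant vector fields are $X_i=\partial_{x_i}+2y_i\partial_t$ and $Y_i=\partial_{y_i}-2x_i\partial_t$; we identify $X_i(\xi)$, $Y_i(\xi)$ with their coefficient vectors in $\mathbb{R}^{2n+1}$ (e.g. $X_i(\xi)=e_{x_i}+2y_ie_t$), and $\langle\cdot,\cdot\rangle$ is the Euclidean inner product on $\mathbb{R}^{2n+1}$. The horizontal gradient is $\nabla_{\mathbb{H}^n}u=(X_1u,\dots,X_nu,Y_1u,\dots,Y_nu)$ and $|\nabla_{\mathbb{H}^n}u|^2=\sum_{i=1}^n(|X_iu|^2+|Y_iu|^2)$. $\mathbb{S}^{2n}$ is the Euclidean unit sphere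 in $\mathbb{R}^{2n+1}$, and $\operatorname{dist}$ denotes Euclidean distance (so $\operatorname{dist}(\xi,\partial\Pi^+_{\nu,d})=\langle\xi,\nu\rangle-d$). Functions $u$ are real-valued. *)

theory Defs
  imports "HOL-Analysis.Analysis"
begin

text \<open>Points of the Heisenberg group H^n = R^(2n+1), written (x,y,t) with x,y in R^n
  (n = CARD('n)) and t real. The inner product on the product type is the Euclidean one.\<close>
type_synonym 'n heis = "(real^'n) \<times> (real^'n) \<times> real"

text \<open>Coefficient vectors of X_i = d/dx_i + 2 y_i d/dt and Y_i = d/dy_i - 2 x_i d/dt.\<close>
definition Xvf :: "'n::finite \<Rightarrow> 'n heis \<Rightarrow> 'n heis" where
  "Xvf i \<xi> = (axis i 1, 0, 2 * (fst (snd \<xi>) $ i))"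

definition Yvf :: "'n::finite \<Rightarrow> 'n heis \<Rightarrow> 'n heis" where
  "Yvf i \<xi> = (0, axis i 1, - 2 * (fst \<xi> $ i))"

coinductive smooth_fun :: "('a::euclidean_space \<Rightarrow> real) \<Rightarrow> bool" where
  "(\<forall>x. f differentiable (at x)) \<Longrightarrow>
   (\<forall>v. smooth_fun (\<lambda>x. frechet_derivative f (at x) v)) \<Longrightarrow> smooth_fun f"

definition Cinf0 :: "'a::euclidean_space set \<Rightarrow> ('a \<Rightarrow> real) set" where
  "Cinf0 \<Omega> = {u. smooth_fun u \<and> compact (closure {x. u x \<noteq> 0}) \<and> closure {x. u x \<noteq> 0} \<subseteq> \<Omega>}"

definition Xder :: "'n::finite \<Rightarrow> ('n heis \<Rightarrow> real) \<Rightarrow> 'n heis \<Rightarrow> real" where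
  "Xder i u \<xi> = frechet_derivative u (at \<xi>) (Xvf i \<xi>)"

definition Yder :: "'n::finite \<Rightarrow> ('n heis \<Rightarrow> real) \<Rightarrow> 'n heis \<Rightarrow> real" where
  "Yder i u \<xi> = frechet_derivative u (at \<xi>) (Yvf i \<xi>)"

definition hgrad_sq :: "('n::finite heis \<Rightarrow> real) \<Rightarrow> 'n heis \<Rightarrow> real" where
  "hgrad_sq u \<xi> = (\<Sum>i\<in>UNIV. (Xder i u \<xi>)\<^sup>2 + (Yder i u \<xi>)\<^sup>2)"

definition halfspace :: "'n::finite heis \<Rightarrow> real \<Rightarrow> 'n heis set" where
  "halfspace \<nu> d = {\<xi>. \<xi> \<bullet> \<nu> > d}"

end

theory Submission
  imports Defs
begin

text \<open>Let \<open>\<delta> = \<langle>\<xi>,\<nu>\<rangle> - d\<close>, the distance to the boundary of the half-space. Each horizontal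
  field \<open>V\<close> among \<open>X\<^sub>i, Y\<^sub>i\<close> has the form \<open>e + c(\<xi>) \<partial>\<^sub>t\<close> with \<open>c\<close> constant along \<open>e\<close> and \<open>\<partial>\<^sub>t\<close>.
  Hence \<open>V\<close> is divergence free, and \<open>a = \<langle>V,\<nu>\<rangle>\<close> satisfies \<open>V a = 0\<close>, \<open>V \<delta> = a\<close>. So the integral of
  \<open>V(u\<^sup>2 a / (2\<delta>)) = u (V u) a / \<delta> - u\<^sup>2 a\<^sup>2 / (2\<delta>\<^sup>2)\<close> vanishes, while completing the square gives
  \<open>(V u)\<^sup>2 \<ge> a\<^sup>2 u\<^sup>2 / (4\<delta>\<^sup>2) + V(u\<^sup>2 a / (2\<delta>))\<close> pointwise. Integrating and summing over the
  \<open>2n\<close> fields yields the inequality.\<close>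

lemma smooth_fun_differentiable: "smooth_fun f \<Longrightarrow> f differentiable (at x)"
  by (erule smooth_fun.cases) auto

lemma smooth_fun_frechet_derivative:
  "smooth_fun f \<Longrightarrow> smooth_fun (\<lambda>x. frechet_derivative f (at x) v)"
  by (erule smooth_fun.cases) auto

lemma smooth_fun_continuous: "smooth_fun f \<Longrightarrow> continuous_on UNIV f"
  by (metis smooth_fun_differentiable differentiable_at_imp_differentiable_on
      differentiable_imp_continuous_on)

lemma Cinf0E:
  assumes "u \<in> Cinf0 \<Omega>"
  obtains K where "smooth_fun u" "compact K" "K \<subseteq> \<Omega>" "\<And>x. x \<notin> K \<Longrightarrow> u x = 0"
proof
  show "smooth_fun u" "compact (closure {x. u x \<noteq> 0})" "closure {x. u x \<noteq> 0} \<subseteq> \<Omega>"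
    using assms by (simp_all add: Cinf0_def)
  show "u x = 0" if "x \<notin> closure {x. u x \<noteq> 0}" for x
    using that closure_subset[of "{x. u x \<noteq> 0}"] by blast
qed

lemma continuous_on_extend_by_zero:
  fixes f g :: "'a::topological_space \<Rightarrow> 'b::{topological_space,zero}"
  assumes "open S" "closed K" "K \<subseteq> S" "continuous_on S f"
    and "\<And>x. x \<notin> K \<Longrightarrow> g x = 0" "\<And>x. x \<in> S \<Longrightarrow> g x = f x"
  shows "continuous_on UNIV g"
proof -
  have "continuous_on S g" using assms(4,6) continuous_on_cong by fastforce
  moreover have "continuous_on (-K) g"
    using assms(5) continuous_on_cong[of "-K" "-K" g "\<lambda>_. 0"] by simp
  ultimately have "continuous_on (S \<union> -K) g"
    using continuous_on_open_Un[OF assms(1) open_Compl[OF assms(2)]] by blast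
  moreover have "S \<union> -K = UNIV" using assms(3) by auto
  ultimately show ?thesis by simp
qed

lemma has_integral_cbox_if_vanishes_outside:
  fixes g :: "'a::euclidean_space \<Rightarrow> 'b::banach"
  assumes "continuous_on UNIV g" "\<And>x. x \<notin> cbox p q \<Longrightarrow> g x = 0"
  shows "(g has_integral integral UNIV g) (cbox p q)" and "g integrable_on UNIV"
proof -
  have box: "(g has_integral integral (cbox p q) g) (cbox p q)"
    using integrable_continuous[OF continuous_on_subset[OF assms(1)]] by blast
  have "(g has_integral integral (cbox p q) g) UNIV"
    by (rule has_integral_on_superset[OF box]) (use assms(2) in auto)
  then have "integral UNIV g = integral (cbox p q) g" and "g integrable_on UNIV"
    by (auto simp only: integral_unique)
  then show "g integrable_on UNIV" and "(g has_integral integral UNIV g) (cbox p q)"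
    using box by simp_all
qed

lemma integrable_on_UNIV_if_compact_support:
  fixes g :: "'a::euclidean_space \<Rightarrow> 'b::banach"
  assumes "continuous_on UNIV g" "compact K" "\<And>x. x \<notin> K \<Longrightarrow> g x = 0"
  shows "g integrable_on UNIV"
proof -
  obtain c where "K \<subseteq> cbox (-c) c"
    using bounded_subset_cbox_symmetric[OF compact_imp_bounded[OF assms(2)]] by blast
  then show ?thesis
    using has_integral_cbox_if_vanishes_outside(2)[OF assms(1)] assms(3) by blast
qed

lemma integrable_on_open_if_compact_support:
  fixes f :: "'a::euclidean_space \<Rightarrow> 'b::banach"
  assumes "open S" "compact K" "K \<subseteq> S" "continuous_on S f"
    and "\<And>x. x \<in> S \<Longrightarrow> x \<notin> K \<Longrightarrow> f x = 0"
  shows "f integrable_on S"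
proof -
  define g where "g x = (if x \<in> S then f x else 0)" for x
  have "continuous_on UNIV g"
    by (rule continuous_on_extend_by_zero[OF assms(1) compact_imp_closed[OF assms(2)] assms(3,4)])
      (use assms(5) in \<open>auto simp: g_def\<close>)
  then have "g integrable_on UNIV"
    by (rule integrable_on_UNIV_if_compact_support[OF _ assms(2)]) (use assms(5) in \<open>auto simp: g_def\<close>)
  then show ?thesis unfolding g_def by (simp add: integrable_restrict_UNIV)
qed

lemma has_real_derivative_along_line:
  assumes "u differentiable (at x)"
  shows "((\<lambda>s. u (x + s *\<^sub>R e)) has_real_derivative frechet_derivative u (at x) e) (at 0)"
proof -
  have u': "(u has_derivative frechet_derivative u (at x)) (at x)"
    using assms frechet_derivative_works by blast
  have "((\<lambda>s::real. x + s *\<^sub>R e) has_derivative (\<lambda>s. s *\<^sub>R e)) (at 0)"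
    by (auto intro!: derivative_eq_intros)
  from has_derivative_compose[OF this] u'
  have "((\<lambda>s. u (x + s *\<^sub>R e)) has_derivative (\<lambda>s. frechet_derivative u (at x) (s *\<^sub>R e))) (at 0)"
    by simp
  moreover have "(\<lambda>s. frechet_derivative u (at x) (s *\<^sub>R e)) = (*) (frechet_derivative u (at x) e)"
    using linear_cmul[OF has_derivative_linear[OF u']] by (simp add: fun_eq_iff mult.commute)
  ultimately show ?thesis unfolding has_field_derivative_def by metis
qed

lemma integral_cbox_translate:
  fixes H :: "'a::euclidean_space \<Rightarrow> 'b::banach"
  assumes "continuous_on UNIV H" "\<And>x. x \<notin> cbox (a + t) (b + t) \<Longrightarrow> H x = 0"
  shows "integral (cbox a b) (\<lambda>x. H (x + t)) = integral UNIV H"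
proof -
  have "(H has_integral integral UNIV H) (cbox (a + t) (b + t))"
    by (rule has_integral_cbox_if_vanishes_outside(1)[OF assms])
  then have "((H \<circ> (+) t) has_integral integral UNIV H) (cbox a b)"
    by (simp add: has_integral_shift_cbox_iff)
  moreover have "H \<circ> (+) t = (\<lambda>x. H (x + t))"
    by (rule ext) (simp add: add.commute)
  ultimately show ?thesis by (metis integral_unique)
qed

lemma compact_line_translates_subset_cbox:
  fixes K :: "'a::euclidean_space set"
  assumes "compact K"
  obtains c where "\<And>x s. x \<in> K \<Longrightarrow> \<bar>s\<bar> \<le> 1 \<Longrightarrow> x - s *\<^sub>R e \<in> cbox (-c) c"
proof -
  obtain R where R: "\<And>x. x \<in> K \<Longrightarrow> norm x \<le> R"
    using compact_imp_bounded[OF assms] by (auto simp: bounded_iff)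
  obtain c :: 'a where c: "cball 0 (R + norm e) \<subseteq> cbox (-c) c"
    using bounded_subset_cbox_symmetric[of "cball 0 (R + norm e)"] by auto
  have "x - s *\<^sub>R e \<in> cbox (-c) c" if "x \<in> K" "\<bar>s\<bar> \<le> 1" for x s
  proof -
    have "norm (s *\<^sub>R e) \<le> norm e" using that(2) by (simp add: mult_left_le_one_le)
    then have "norm (x - s *\<^sub>R e) \<le> R + norm e"
      using norm_triangle_ineq4[of x "s *\<^sub>R e"] R[OF that(1)] by linarith
    then show ?thesis using c by auto
  qed
  then show ?thesis using that by blast
qed

text \<open>Differentiating the translation invariant integral of \<open>H\<close> along \<open>e\<close> under the integral
  sign (on a box large enough for all translates) shows that the integral of the derivative vanishes.\<close>

lemma line_derivative_has_integral_0:
  fixes H h :: "'a::euclidean_space \<Rightarrow> real"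
  assumes K: "compact K" and cH: "continuous_on UNIV H" and ch: "continuous_on UNIV h"
    and H0: "\<And>x. x \<notin> K \<Longrightarrow> H x = 0" and h0: "\<And>x. x \<notin> K \<Longrightarrow> h x = 0"
    and D: "\<And>x. ((\<lambda>s. H (x + s *\<^sub>R e)) has_real_derivative h x) (at 0)"
  shows "(h has_integral 0) UNIV"
proof -
  obtain c where shifted_in_box: "\<And>x s. x \<in> K \<Longrightarrow> \<bar>s\<bar> \<le> 1 \<Longrightarrow> x - s *\<^sub>R e \<in> cbox (-c) c"
    using compact_line_translates_subset_cbox[OF K] by blast
  define \<Phi> where "\<Phi> s = integral (cbox (-c) c) (\<lambda>x. H (x + s *\<^sub>R e))" for s
  have \<Phi>_const: "\<Phi> s = integral UNIV H" if "s \<in> ball 0 1" for s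
    unfolding \<Phi>_def
  proof (rule integral_cbox_translate[OF cH])
    fix x assume "x \<notin> cbox (-c + s *\<^sub>R e) (c + s *\<^sub>R e)"
    moreover have "x \<in> cbox (s *\<^sub>R e + -c) (s *\<^sub>R e + c)" if "x \<in> K"
      unfolding cbox_translation using shifted_in_box[OF that] \<open>s \<in> ball 0 1\<close>
      by (auto intro: image_eqI[of _ _ "x - s *\<^sub>R e"])
    ultimately show "H x = 0" using H0 by (auto simp: add.commute)
  qed
  have "(\<Phi> has_field_derivative integral (cbox (-c) c) (\<lambda>x. h (x + 0 *\<^sub>R e))) (at 0 within ball 0 1)"
    unfolding \<Phi>_def
  proof (rule leibniz_rule_field_derivative)
    fix s :: real and x :: 'a
    have "((\<lambda>r. H ((x + s *\<^sub>R e) + r *\<^sub>R e)) has_real_derivative h (x + s *\<^sub>R e)) (at 0)"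
      by (rule D)
    then have "((\<lambda>r. H (x + r *\<^sub>R e)) has_real_derivative h (x + s *\<^sub>R e)) (at (0 + s))"
      by (subst DERIV_shift) (simp add: scaleR_add_left add_ac)
    then show "((\<lambda>s. H (x + s *\<^sub>R e)) has_real_derivative h (x + s *\<^sub>R e)) (at s within ball 0 1)"
      by (simp add: has_field_derivative_at_within)
  next
    fix s :: real
    show "(\<lambda>x. H (x + s *\<^sub>R e)) integrable_on cbox (- c) c"
      by (intro integrable_continuous continuous_on_compose2[OF cH] continuous_intros) auto
  next
    show "continuous_on (ball 0 1 \<times> cbox (- c) c) (\<lambda>(s, x). h (x + s *\<^sub>R e))"
      unfolding split_beta by (intro continuous_on_compose2[OF ch] continuous_intros) auto
  qed auto
  moreover have "at (0::real) within ball 0 1 = at 0"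
    by (rule at_within_open) auto
  ultimately have \<Phi>': "(\<Phi> has_field_derivative integral (cbox (-c) c) h) (at 0)"
    by simp
  have "((\<lambda>s. integral UNIV H) has_field_derivative integral (cbox (-c) c) h) (at 0)"
    by (rule has_field_derivative_transform_within_open[OF \<Phi>', of "ball 0 1"]) (auto simp: \<Phi>_const)
  then have box0: "integral (cbox (-c) c) h = 0"
    using DERIV_unique[OF _ DERIV_const] by blast
  have "h x = 0" if "x \<notin> cbox (-c) c" for x
    using that shifted_in_box[of x 0] h0 by auto
  then have "(h has_integral integral UNIV h) (cbox (-c) c)" and "h integrable_on UNIV"
    using has_integral_cbox_if_vanishes_outside[OF ch] by blast+
  then show ?thesis
    using box0 by (metis integral_unique has_integral_integral)
qed

lemma frechet_derivative_eq_0_outside_support: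
  fixes u :: "'a::euclidean_space \<Rightarrow> real"
  assumes "closed K" "\<And>x. x \<notin> K \<Longrightarrow> u x = 0" "x \<notin> K"
  shows "frechet_derivative u (at x) v = 0"
proof -
  have "((\<lambda>_. 0::real) has_derivative (\<lambda>_. 0)) (at x)" by simp
  then have "(u has_derivative (\<lambda>_. 0)) (at x)"
    by (rule has_derivative_transform_within_open[of _ _ _ _ "-K"]) (use assms in auto)
  then show ?thesis by (metis frechet_derivative_at)
qed

text \<open>For \<open>a = \<langle>V,\<nu>\<rangle>\<close> this is \<open>u\<^sup>2 a / (2\<delta>)\<close> extended by zero outside the half-space; its
  derivative along a direction \<open>e\<close> in which \<open>a\<close> is constant is \<open>hardy_potential_deriv\<close>.\<close>

definition hardy_potential ::
  "('a::euclidean_space \<Rightarrow> real) \<Rightarrow> ('a \<Rightarrow> real) \<Rightarrow> 'a \<Rightarrow> real \<Rightarrow> 'a \<Rightarrow> real" where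
  "hardy_potential u a \<nu> d \<xi> =
    (if d < \<xi> \<bullet> \<nu> then (u \<xi>)\<^sup>2 * a \<xi> / (2 * (\<xi> \<bullet> \<nu> - d)) else 0)"

definition hardy_potential_deriv ::
  "('a::euclidean_space \<Rightarrow> real) \<Rightarrow> ('a \<Rightarrow> real) \<Rightarrow> 'a \<Rightarrow> real \<Rightarrow> 'a \<Rightarrow> 'a \<Rightarrow> real" where
  "hardy_potential_deriv u a \<nu> d e \<xi> =
    (if d < \<xi> \<bullet> \<nu> then u \<xi> * frechet_derivative u (at \<xi>) e * a \<xi> / (\<xi> \<bullet> \<nu> - d)
        - (u \<xi>)\<^sup>2 * a \<xi> * (e \<bullet> \<nu>) / (2 * (\<xi> \<bullet> \<nu> - d)\<^sup>2)
     else 0)"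

lemma open_halfspace_inner_gt: "open {\<xi>::'a::real_inner. d < \<xi> \<bullet> \<nu>}"
  by (intro open_Collect_less continuous_intros)

lemma continuous_on_hardy_potential:
  fixes u a :: "'a::euclidean_space \<Rightarrow> real"
  assumes "continuous_on UNIV u" "continuous_on UNIV a"
    and "closed K" "K \<subseteq> {\<xi>. d < \<xi> \<bullet> \<nu>}" "\<And>x. x \<notin> K \<Longrightarrow> u x = 0"
  shows "continuous_on UNIV (hardy_potential u a \<nu> d)"
proof (rule continuous_on_extend_by_zero[OF open_halfspace_inner_gt assms(3,4)])
  show "continuous_on {\<xi>. d < \<xi> \<bullet> \<nu>} (\<lambda>\<xi>. (u \<xi>)\<^sup>2 * a \<xi> / (2 * (\<xi> \<bullet> \<nu> - d)))"
    using assms(1,2) by (intro continuous_intros) (auto elim: continuous_on_subset)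
qed (auto simp: hardy_potential_def assms(5))

lemma continuous_on_hardy_potential_deriv:
  fixes u a :: "'a::euclidean_space \<Rightarrow> real"
  assumes "continuous_on UNIV u" "continuous_on UNIV (\<lambda>x. frechet_derivative u (at x) e)"
    and "continuous_on UNIV a"
    and "closed K" "K \<subseteq> {\<xi>. d < \<xi> \<bullet> \<nu>}" "\<And>x. x \<notin> K \<Longrightarrow> u x = 0"
  shows "continuous_on UNIV (hardy_potential_deriv u a \<nu> d e)"
proof (rule continuous_on_extend_by_zero[OF open_halfspace_inner_gt assms(4,5)])
  show "continuous_on {\<xi>. d < \<xi> \<bullet> \<nu>} (\<lambda>\<xi>. u \<xi> * frechet_derivative u (at \<xi>) e * a \<xi> / (\<xi> \<bullet> \<nu> - d)
        - (u \<xi>)\<^sup>2 * a \<xi> * (e \<bullet> \<nu>) / (2 * (\<xi> \<bullet> \<nu> - d)\<^sup>2))"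
    using assms(1-3) by (intro continuous_intros) (auto elim: continuous_on_subset)
qed (auto simp: hardy_potential_deriv_def assms(6))

lemma hardy_potential_has_line_derivative:
  fixes u a :: "'a::euclidean_space \<Rightarrow> real"
  assumes "\<And>x. u differentiable (at x)"
    and K: "closed K" "K \<subseteq> {\<xi>. d < \<xi> \<bullet> \<nu>}" and u0: "\<And>x. x \<notin> K \<Longrightarrow> u x = 0"
    and a_inv: "\<And>x s. a (x + s *\<^sub>R e) = a x"
  shows "((\<lambda>s. hardy_potential u a \<nu> d (x + s *\<^sub>R e))
           has_real_derivative hardy_potential_deriv u a \<nu> d e x) (at 0)"
proof (cases "d < x \<bullet> \<nu>")
  case True
  define T where "T = {s::real. d < x \<bullet> \<nu> + s * (e \<bullet> \<nu>)}"
  have "open T" unfolding T_def by (intro open_Collect_less continuous_intros)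
  have quotient_rule: "((\<lambda>s. (U s)\<^sup>2 * A / (2 * (\<delta> + s * \<beta>))) has_real_derivative
      U 0 * P * A / \<delta> - (U 0)\<^sup>2 * A * \<beta> / (2 * \<delta>\<^sup>2)) (at 0)"
    if "(U has_real_derivative P) (at 0)" "\<delta> \<noteq> 0" for U :: "real \<Rightarrow> real" and P A \<delta> \<beta> :: real
    using that by (auto intro!: derivative_eq_intros simp: field_simps power2_eq_square)
  have "((\<lambda>s. (u (x + s *\<^sub>R e))\<^sup>2 * a x / (2 * ((x \<bullet> \<nu> - d) + s * (e \<bullet> \<nu>))))
         has_real_derivative hardy_potential_deriv u a \<nu> d e x) (at 0)"
    using quotient_rule[OF has_real_derivative_along_line[OF assms(1), of x e],
        where \<delta> = "x \<bullet> \<nu> - d" and A = "a x" and \<beta> = "e \<bullet> \<nu>"] True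
    by (simp add: hardy_potential_deriv_def)
  then show ?thesis
  proof (rule has_field_derivative_transform_within_open[OF _ \<open>open T\<close>])
    show "0 \<in> T" using True by (simp add: T_def)
  qed (auto simp: T_def hardy_potential_def a_inv algebra_simps)
next
  case False
  then have "x \<notin> K" using K(2) by auto
  define T where "T = (\<lambda>s::real. x + s *\<^sub>R e) -` (-K)"
  have "open T" unfolding T_def
    by (intro open_vimage continuous_intros) (simp add: K(1) open_Compl)
  have "((\<lambda>s. 0) has_real_derivative hardy_potential_deriv u a \<nu> d e x) (at 0)"
    using False by (simp add: hardy_potential_deriv_def)
  then show ?thesis
  proof (rule has_field_derivative_transform_within_open[OF _ \<open>open T\<close>])
    show "0 \<in> T" using \<open>x \<notin> K\<close> by (simp add: T_def)
  qed (auto simp: T_def hardy_potential_def u0)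
qed

lemma frechet_derivative_add_scaleR:
  assumes "u differentiable (at x)"
  shows "frechet_derivative u (at x) (e + c *\<^sub>R f) =
    frechet_derivative u (at x) e + c * frechet_derivative u (at x) f"
proof -
  have "linear (frechet_derivative u (at x))"
    using assms frechet_derivative_works has_derivative_linear by blast
  then show ?thesis by (simp add: linear_add linear_cmul)
qed

text \<open>\<open>he + c hf\<close> is the derivative of \<open>G\<close> along the field \<open>e + c f\<close>, which is divergence free
  because \<open>c\<close> is constant along \<open>f\<close>.\<close>

lemma field_derivative_has_integral_0:
  fixes G he hf c :: "'a::euclidean_space \<Rightarrow> real"
  assumes K: "compact K" and cG: "continuous_on UNIV G"
    and che: "continuous_on UNIV he" and chf: "continuous_on UNIV hf" and cc: "continuous_on UNIV c"
    and vanish: "\<And>x. x \<notin> K \<Longrightarrow> G x = 0 \<and> he x = 0 \<and> hf x = 0"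
    and De: "\<And>x. ((\<lambda>s. G (x + s *\<^sub>R e)) has_real_derivative he x) (at 0)"
    and Df: "\<And>x. ((\<lambda>s. G (x + s *\<^sub>R f)) has_real_derivative hf x) (at 0)"
    and c_inv: "\<And>x s. c (x + s *\<^sub>R f) = c x"
  shows "((\<lambda>x. he x + c x * hf x) has_integral 0) UNIV"
proof -
  have he0: "(he has_integral 0) UNIV"
    by (rule line_derivative_has_integral_0[OF K cG che _ _ De]) (simp_all add: vanish)
  have hf0: "((\<lambda>x. c x * hf x) has_integral 0) UNIV"
  proof (rule line_derivative_has_integral_0
      [OF K continuous_on_mult[OF cc cG] continuous_on_mult[OF cc chf]])
    show "((\<lambda>s. c (x + s *\<^sub>R f) * G (x + s *\<^sub>R f)) has_real_derivative c x * hf x) (at 0)" for x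
      unfolding c_inv by (intro DERIV_cmult Df)
  qed (simp_all add: vanish)
  show ?thesis
    using has_integral_add[OF he0 hf0] by simp
qed

lemma hardy_cross_term_has_integral_0:
  fixes u c :: "'a::euclidean_space \<Rightarrow> real"
  assumes ud: "\<And>x. u differentiable (at x)"
    and du: "\<And>v. continuous_on UNIV (\<lambda>x. frechet_derivative u (at x) v)"
    and K: "compact K" "K \<subseteq> {\<xi>. d < \<xi> \<bullet> \<nu>}" and u0: "\<And>x. x \<notin> K \<Longrightarrow> u x = 0"
    and V: "V = (\<lambda>\<xi>. e + c \<xi> *\<^sub>R f)" and cc: "continuous_on UNIV c"
    and c_inv: "\<And>x s. c (x + s *\<^sub>R e) = c x" "\<And>x s. c (x + s *\<^sub>R f) = c x"
  shows "((\<lambda>\<xi>. u \<xi> * frechet_derivative u (at \<xi>) (V \<xi>) * (V \<xi> \<bullet> \<nu>) / (\<xi> \<bullet> \<nu> - d)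
             - (u \<xi>)\<^sup>2 * (V \<xi> \<bullet> \<nu>)\<^sup>2 / (2 * (\<xi> \<bullet> \<nu> - d)\<^sup>2))
          has_integral 0) {\<xi>. d < \<xi> \<bullet> \<nu>}"
proof -
  define a where "a \<xi> = V \<xi> \<bullet> \<nu>" for \<xi>
  have a_inv: "a (x + s *\<^sub>R e) = a x" "a (x + s *\<^sub>R f) = a x" for x s
    by (simp_all add: a_def V c_inv)
  have ca: "continuous_on UNIV a"
    unfolding a_def V using cc by (intro continuous_intros)
  have cu: "continuous_on UNIV u"
    by (simp add: ud differentiable_at_imp_differentiable_on differentiable_imp_continuous_on)
  have cK: "closed K" using K(1) by (rule compact_imp_closed)
  have D: "((\<lambda>s. hardy_potential u a \<nu> d (x + s *\<^sub>R v))
      has_real_derivative hardy_potential_deriv u a \<nu> d v x) (at 0)"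
    if "\<And>x s. a (x + s *\<^sub>R v) = a x" for x v
    using hardy_potential_has_line_derivative[OF ud cK K(2) u0 that] .
  note C' = continuous_on_hardy_potential_deriv[OF cu du ca cK K(2) u0]
  have int0: "((\<lambda>x. hardy_potential_deriv u a \<nu> d e x + c x * hardy_potential_deriv u a \<nu> d f x)
      has_integral 0) UNIV"
    by (rule field_derivative_has_integral_0[where G = "hardy_potential u a \<nu> d"
          and he = "hardy_potential_deriv u a \<nu> d e" and hf = "hardy_potential_deriv u a \<nu> d f",
          OF K(1) continuous_on_hardy_potential[OF cu ca cK K(2) u0] C' C' cc _
          D[OF a_inv(1)] D[OF a_inv(2)] c_inv(2)])
      (auto simp: hardy_potential_def hardy_potential_deriv_def u0)
  have pointwise: "hardy_potential_deriv u a \<nu> d e \<xi> + c \<xi> * hardy_potential_deriv u a \<nu> d f \<xi> =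
    (if \<xi> \<in> {\<xi>. d < \<xi> \<bullet> \<nu>}
     then u \<xi> * frechet_derivative u (at \<xi>) (V \<xi>) * a \<xi> / (\<xi> \<bullet> \<nu> - d)
            - (u \<xi>)\<^sup>2 * (a \<xi>)\<^sup>2 / (2 * (\<xi> \<bullet> \<nu> - d)\<^sup>2)
     else 0)" for \<xi>
  proof -
    have "frechet_derivative u (at \<xi>) (V \<xi>) =
        frechet_derivative u (at \<xi>) e + c \<xi> * frechet_derivative u (at \<xi>) f"
      unfolding V by (rule frechet_derivative_add_scaleR[OF ud])
    moreover have "a \<xi> = e \<bullet> \<nu> + c \<xi> * (f \<bullet> \<nu>)"
      by (simp add: a_def V inner_add_left)
    ultimately show ?thesis
      by (simp add: hardy_potential_deriv_def add_divide_distrib diff_divide_distrib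
          power2_eq_square algebra_simps)
  qed
  show ?thesis
    using int0 unfolding pointwise has_integral_restrict_UNIV a_def .
qed

lemma hardy_pointwise_bound:
  fixes p U A \<delta> :: real
  assumes "\<delta> \<noteq> 0"
  shows "1/4 * (A\<^sup>2 / \<delta>\<^sup>2 * U\<^sup>2) + (U * p * A / \<delta> - U\<^sup>2 * A\<^sup>2 / (2 * \<delta>\<^sup>2)) \<le> p\<^sup>2"
proof -
  have "1/4 * (A\<^sup>2 / \<delta>\<^sup>2 * U\<^sup>2) + (U * p * A / \<delta> - U\<^sup>2 * A\<^sup>2 / (2 * \<delta>\<^sup>2))
      = p\<^sup>2 - (p - U * A / (2 * \<delta>))\<^sup>2"
    using assms by (simp add: field_simps power2_eq_square)
  then show ?thesis by simp
qed

lemma hardy_inequality_halfspace_along_field: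
  fixes u c :: "'a::euclidean_space \<Rightarrow> real"
  assumes ud: "\<And>x. u differentiable (at x)"
    and du: "\<And>v. continuous_on UNIV (\<lambda>x. frechet_derivative u (at x) v)"
    and K: "compact K" "K \<subseteq> {\<xi>. d < \<xi> \<bullet> \<nu>}" and u0: "\<And>x. x \<notin> K \<Longrightarrow> u x = 0"
    and V: "V = (\<lambda>\<xi>. e + c \<xi> *\<^sub>R f)" and cc: "continuous_on UNIV c"
    and c_inv: "\<And>x s. c (x + s *\<^sub>R e) = c x" "\<And>x s. c (x + s *\<^sub>R f) = c x"
  shows "(\<lambda>\<xi>. (frechet_derivative u (at \<xi>) (V \<xi>))\<^sup>2) integrable_on {\<xi>. d < \<xi> \<bullet> \<nu>}"
    and "(\<lambda>\<xi>. (V \<xi> \<bullet> \<nu>)\<^sup>2 / (\<xi> \<bullet> \<nu> - d)\<^sup>2 * (u \<xi>)\<^sup>2) integrable_on {\<xi>. d < \<xi> \<bullet> \<nu>}"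
    and "1/4 * integral {\<xi>. d < \<xi> \<bullet> \<nu>} (\<lambda>\<xi>. (V \<xi> \<bullet> \<nu>)\<^sup>2 / (\<xi> \<bullet> \<nu> - d)\<^sup>2 * (u \<xi>)\<^sup>2)
      \<le> integral {\<xi>. d < \<xi> \<bullet> \<nu>} (\<lambda>\<xi>. (frechet_derivative u (at \<xi>) (V \<xi>))\<^sup>2)"
proof -
  let ?\<Omega> = "{\<xi>. d < \<xi> \<bullet> \<nu>}"
  have cu: "continuous_on UNIV u"
    by (simp add: ud differentiable_at_imp_differentiable_on differentiable_imp_continuous_on)
  have [continuous_intros]: "continuous_on S u" "continuous_on S c"
    "continuous_on S (\<lambda>x. frechet_derivative u (at x) v)" for S v
    using cu cc du[of v] by (auto elim: continuous_on_subset)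
  have DuV: "frechet_derivative u (at \<xi>) (V \<xi>) =
      frechet_derivative u (at \<xi>) e + c \<xi> * frechet_derivative u (at \<xi>) f" for \<xi>
    unfolding V by (rule frechet_derivative_add_scaleR[OF ud])
  have Du0: "frechet_derivative u (at \<xi>) v = 0" if "\<xi> \<notin> K" for \<xi> v
    by (rule frechet_derivative_eq_0_outside_support[OF compact_imp_closed[OF K(1)] u0 that])
  show int_D: "(\<lambda>\<xi>. (frechet_derivative u (at \<xi>) (V \<xi>))\<^sup>2) integrable_on ?\<Omega>"
  proof (rule integrable_on_open_if_compact_support[OF open_halfspace_inner_gt K])
    show "continuous_on ?\<Omega> (\<lambda>\<xi>. (frechet_derivative u (at \<xi>) (V \<xi>))\<^sup>2)"
      unfolding DuV by (intro continuous_intros)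
  qed (simp add: Du0)
  show int_W: "(\<lambda>\<xi>. (V \<xi> \<bullet> \<nu>)\<^sup>2 / (\<xi> \<bullet> \<nu> - d)\<^sup>2 * (u \<xi>)\<^sup>2) integrable_on ?\<Omega>"
  proof (rule integrable_on_open_if_compact_support[OF open_halfspace_inner_gt K])
    show "continuous_on ?\<Omega> (\<lambda>\<xi>. (V \<xi> \<bullet> \<nu>)\<^sup>2 / (\<xi> \<bullet> \<nu> - d)\<^sup>2 * (u \<xi>)\<^sup>2)"
      unfolding V by (intro continuous_intros) auto
  qed (simp add: u0)
  have "((\<lambda>\<xi>. 1/4 * ((V \<xi> \<bullet> \<nu>)\<^sup>2 / (\<xi> \<bullet> \<nu> - d)\<^sup>2 * (u \<xi>)\<^sup>2)
        + (u \<xi> * frechet_derivative u (at \<xi>) (V \<xi>) * (V \<xi> \<bullet> \<nu>) / (\<xi> \<bullet> \<nu> - d)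
           - (u \<xi>)\<^sup>2 * (V \<xi> \<bullet> \<nu>)\<^sup>2 / (2 * (\<xi> \<bullet> \<nu> - d)\<^sup>2)))
      has_integral (1/4 * integral ?\<Omega> (\<lambda>\<xi>. (V \<xi> \<bullet> \<nu>)\<^sup>2 / (\<xi> \<bullet> \<nu> - d)\<^sup>2 * (u \<xi>)\<^sup>2) + 0)) ?\<Omega>"
    using has_integral_add[OF has_integral_mult_right[where c = "1/4", OF integrable_integral[OF int_W]]
        hardy_cross_term_has_integral_0[OF ud du K u0 V cc c_inv]] .
  then have "1/4 * integral ?\<Omega> (\<lambda>\<xi>. (V \<xi> \<bullet> \<nu>)\<^sup>2 / (\<xi> \<bullet> \<nu> - d)\<^sup>2 * (u \<xi>)\<^sup>2) + 0
      \<le> integral ?\<Omega> (\<lambda>\<xi>. (frechet_derivative u (at \<xi>) (V \<xi>))\<^sup>2)"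
    by (rule has_integral_le[OF _ integrable_integral[OF int_D]])
      (rule hardy_pointwise_bound; simp)
  then show "1/4 * integral ?\<Omega> (\<lambda>\<xi>. (V \<xi> \<bullet> \<nu>)\<^sup>2 / (\<xi> \<bullet> \<nu> - d)\<^sup>2 * (u \<xi>)\<^sup>2)
      \<le> integral ?\<Omega> (\<lambda>\<xi>. (frechet_derivative u (at \<xi>) (V \<xi>))\<^sup>2)"
    by simp
qed

lemma hardy_inequality_halfspace_fields:
  fixes u :: "'a::euclidean_space \<Rightarrow> real" and c :: "'k \<Rightarrow> 'a \<Rightarrow> real"
  assumes ud: "\<And>x. u differentiable (at x)"
    and du: "\<And>v. continuous_on UNIV (\<lambda>x. frechet_derivative u (at x) v)"
    and K: "compact K" "K \<subseteq> {\<xi>. d < \<xi> \<bullet> \<nu>}" and u0: "\<And>x. x \<notin> K \<Longrightarrow> u x = 0"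
    and "finite I"
    and V: "\<And>k. V k = (\<lambda>\<xi>. e k + c k \<xi> *\<^sub>R f k)" and cc: "\<And>k. continuous_on UNIV (c k)"
    and c_inv: "\<And>k x s. c k (x + s *\<^sub>R e k) = c k x" "\<And>k x s. c k (x + s *\<^sub>R f k) = c k x"
  shows "1/4 * integral {\<xi>. d < \<xi> \<bullet> \<nu>}
           (\<lambda>\<xi>. \<Sum>k\<in>I. (V k \<xi> \<bullet> \<nu>)\<^sup>2 / (\<xi> \<bullet> \<nu> - d)\<^sup>2 * (u \<xi>)\<^sup>2)
    \<le> integral {\<xi>. d < \<xi> \<bullet> \<nu>} (\<lambda>\<xi>. \<Sum>k\<in>I. (frechet_derivative u (at \<xi>) (V k \<xi>))\<^sup>2)"
proof -
  note field = hardy_inequality_halfspace_along_field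
    [where V = "V k" and e = "e k" and c = "c k" and f = "f k" for k, OF ud du K u0 V cc c_inv]
  have "1/4 * integral {\<xi>. d < \<xi> \<bullet> \<nu>}
           (\<lambda>\<xi>. \<Sum>k\<in>I. (V k \<xi> \<bullet> \<nu>)\<^sup>2 / (\<xi> \<bullet> \<nu> - d)\<^sup>2 * (u \<xi>)\<^sup>2)
      = (\<Sum>k\<in>I. 1/4 * integral {\<xi>. d < \<xi> \<bullet> \<nu>}
           (\<lambda>\<xi>. (V k \<xi> \<bullet> \<nu>)\<^sup>2 / (\<xi> \<bullet> \<nu> - d)\<^sup>2 * (u \<xi>)\<^sup>2))"
    by (subst integral_sum[OF \<open>finite I\<close> field(2)]) (simp_all add: sum_distrib_left)
  also have "\<dots> \<le> (\<Sum>k\<in>I. integral {\<xi>. d < \<xi> \<bullet> \<nu>} (\<lambda>\<xi>. (frechet_derivative u (at \<xi>) (V k \<xi>))\<^sup>2))"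
    by (rule sum_mono) (rule field(3))
  also have "\<dots> = integral {\<xi>. d < \<xi> \<bullet> \<nu>} (\<lambda>\<xi>. \<Sum>k\<in>I. (frechet_derivative u (at \<xi>) (V k \<xi>))\<^sup>2)"
    by (rule integral_sum[symmetric, OF \<open>finite I\<close> field(1)])
  finally show ?thesis .
qed

lemma infdist_frontier_halfspace:
  fixes \<nu> \<xi> :: "'a::euclidean_space"
  assumes "norm \<nu> = 1" "d < \<xi> \<bullet> \<nu>"
  shows "infdist \<xi> (frontier {x. d < x \<bullet> \<nu>}) = \<xi> \<bullet> \<nu> - d"
proof -
  have "{x. d < x \<bullet> \<nu>} = {x. \<nu> \<bullet> x > d}" by (simp add: inner_commute)
  moreover have "\<nu> \<noteq> 0" using assms(1) by auto
  ultimately have "frontier {x. d < x \<bullet> \<nu>} = {x. \<nu> \<bullet> x = d}"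
    using frontier_halfspace_gt[of \<nu> d] by simp
  moreover have "infdist \<xi> {x. \<nu> \<bullet> x = d} = \<xi> \<bullet> \<nu> - d"
  proof (rule antisym)
    have \<nu>\<nu>: "\<nu> \<bullet> \<nu> = 1" using assms(1) by (simp add: power2_norm_eq_inner[symmetric])
    let ?p = "\<xi> - (\<xi> \<bullet> \<nu> - d) *\<^sub>R \<nu>"
    have "?p \<in> {x. \<nu> \<bullet> x = d}" using \<nu>\<nu> by (simp add: inner_diff_right inner_commute)
    moreover have "dist \<xi> ?p = \<xi> \<bullet> \<nu> - d" using assms by (simp add: dist_norm)
    ultimately show "infdist \<xi> {x. \<nu> \<bullet> x = d} \<le> \<xi> \<bullet> \<nu> - d"
      by (metis infdist_le)
    have "\<xi> \<bullet> \<nu> - d \<le> dist \<xi> y" if "\<nu> \<bullet> y = d" for y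
    proof -
      have "\<xi> \<bullet> \<nu> - d = (\<xi> - y) \<bullet> \<nu>" using that by (simp add: inner_diff_left inner_diff_right inner_commute)
      also have "\<dots> \<le> norm (\<xi> - y) * norm \<nu>" by (rule norm_cauchy_schwarz)
      finally show ?thesis using assms(1) by (simp add: dist_norm)
    qed
    then show "\<xi> \<bullet> \<nu> - d \<le> infdist \<xi> {x. \<nu> \<bullet> x = d}"
      using \<open>?p \<in> _\<close> by (subst infdist_notempty) (auto intro!: cINF_greatest)
  qed
  ultimately show ?thesis by simp
qed

definition horizontal_dir :: "'n::finite + 'n \<Rightarrow> 'n heis" where
  "horizontal_dir = case_sum (\<lambda>i. (axis i 1, 0, 0)) (\<lambda>i. (0, axis i 1, 0))"

definition horizontal_coeff :: "'n::finite + 'n \<Rightarrow> 'n heis \<Rightarrow> real" where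
  "horizontal_coeff = case_sum (\<lambda>i \<xi>. 2 * fst (snd \<xi>) $ i) (\<lambda>i \<xi>. - 2 * fst \<xi> $ i)"

lemma horizontal_field_eq:
  "case_sum Xvf Yvf k = (\<lambda>\<xi>. horizontal_dir k + horizontal_coeff k \<xi> *\<^sub>R (0, 0, 1))"
  by (cases k) (simp_all add: fun_eq_iff Xvf_def Yvf_def horizontal_dir_def horizontal_coeff_def)

lemma continuous_on_horizontal_coeff: "continuous_on UNIV (horizontal_coeff k)"
  by (cases k; simp add: horizontal_coeff_def; intro continuous_intros)

text \<open>The \<open>\<partial>\<^sub>t\<close>-coefficient of \<open>X\<^sub>i\<close> (of \<open>Y\<^sub>i\<close>) depends neither on \<open>x\<^sub>i\<close> (on \<open>y\<^sub>i\<close>) nor on \<open>t\<close>: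
  this makes the horizontal fields divergence free.\<close>

lemma horizontal_coeff_translate:
  "horizontal_coeff k (\<xi> + s *\<^sub>R horizontal_dir k) = horizontal_coeff k \<xi>"
  "horizontal_coeff k (\<xi> + s *\<^sub>R (0, 0, 1)) = horizontal_coeff k \<xi>"
  by (cases k; simp add: horizontal_coeff_def horizontal_dir_def)+

theorem theorem2p1:
  fixes \<nu> :: "'n::finite heis" and d :: real and u :: "'n heis \<Rightarrow> real"
  assumes "norm \<nu> = 1"
    and "u \<in> Cinf0 (halfspace \<nu> d)"
  shows "integral (halfspace \<nu> d) (\<lambda>\<xi>. hgrad_sq u \<xi>)
       \<ge> 1/4 * integral (halfspace \<nu> d)
           (\<lambda>\<xi>. (\<Sum>i\<in>UNIV. (Xvf i \<xi> \<bullet> \<nu>)\<^sup>2 + (Yvf i \<xi> \<bullet> \<nu>)\<^sup>2)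
                 / (infdist \<xi> (frontier (halfspace \<nu> d)))\<^sup>2 * \<bar>u \<xi>\<bar>\<^sup>2)"
proof -
  obtain K where u: "smooth_fun u" and K: "compact K" "K \<subseteq> {\<xi>. d < \<xi> \<bullet> \<nu>}"
    and u0: "\<And>x. x \<notin> K \<Longrightarrow> u x = 0"
    using Cinf0E[OF assms(2)[unfolded halfspace_def]] by blast
  have "1/4 * integral {\<xi>. d < \<xi> \<bullet> \<nu>}
           (\<lambda>\<xi>. \<Sum>k\<in>UNIV. (case_sum Xvf Yvf k \<xi> \<bullet> \<nu>)\<^sup>2 / (\<xi> \<bullet> \<nu> - d)\<^sup>2 * (u \<xi>)\<^sup>2)
    \<le> integral {\<xi>. d < \<xi> \<bullet> \<nu>}
           (\<lambda>\<xi>. \<Sum>k\<in>UNIV. (frechet_derivative u (at \<xi>) (case_sum Xvf Yvf k \<xi>))\<^sup>2)"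
    by (rule hardy_inequality_halfspace_fields[where V = "case_sum Xvf Yvf" and e = horizontal_dir
          and c = horizontal_coeff and f = "\<lambda>_. (0, 0, 1)",
          OF smooth_fun_differentiable[OF u] smooth_fun_continuous[OF smooth_fun_frechet_derivative[OF u]]
          K u0 finite_class.finite_UNIV horizontal_field_eq continuous_on_horizontal_coeff
          horizontal_coeff_translate])
  moreover have "integral {\<xi>. d < \<xi> \<bullet> \<nu>}
           (\<lambda>\<xi>. \<Sum>k\<in>UNIV. (frechet_derivative u (at \<xi>) (case_sum Xvf Yvf k \<xi>))\<^sup>2)
      = integral (halfspace \<nu> d) (\<lambda>\<xi>. hgrad_sq u \<xi>)"
    by (simp add: halfspace_def hgrad_sq_def Xder_def Yder_def UNIV_Plus_UNIV[symmetric] sum.Plus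
        sum.distrib del: UNIV_Plus_UNIV)
  moreover have "integral {\<xi>. d < \<xi> \<bullet> \<nu>}
           (\<lambda>\<xi>. \<Sum>k\<in>UNIV. (case_sum Xvf Yvf k \<xi> \<bullet> \<nu>)\<^sup>2 / (\<xi> \<bullet> \<nu> - d)\<^sup>2 * (u \<xi>)\<^sup>2)
      = integral (halfspace \<nu> d)
           (\<lambda>\<xi>. (\<Sum>i\<in>UNIV. (Xvf i \<xi> \<bullet> \<nu>)\<^sup>2 + (Yvf i \<xi> \<bullet> \<nu>)\<^sup>2)
                 / (infdist \<xi> (frontier (halfspace \<nu> d)))\<^sup>2 * \<bar>u \<xi>\<bar>\<^sup>2)"
    unfolding halfspace_def by (rule integral_cong)
      (simp add: infdist_frontier_halfspace[OF assms(1)] UNIV_Plus_UNIV[symmetric] sum.Plus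
        sum.distrib sum_divide_distrib sum_distrib_right add_divide_distrib distrib_right
        del: UNIV_Plus_UNIV)
  ultimately show ?thesis by simp
qed

end
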